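(* Let $X$, $Y$ be disjoint sets of cardinality at least two, $T$ the $(|X|,|Y|)$-biregular tree, and $c, c'$ legal colourings of $X$ and $Y$. If $v,v'\in VT$ are at even distance, then there exists $\sigma\in\mathrm{Sym}(X\cup Y)$ with $\sigma(X)=X$ satisfying $\sigma(c'(\overline{A}(v'))) = c(\overline{A}(v))$, and for every such $\sigma$ there exists a unique automorphism $g\in\mathrm{Aut}(T)$ with $gV_X=V_X$ such that $gv=v'$ and $c = \sigma\circ c'\circ g$ (as maps $AT\to X\cup Y$).
   Context: $T$ has natural bipartition $VT=V_X\sqcup V_Y$ (vertices in $V_X$ have valency $|X|$, in $V_Y$ valency $|Y|$). $A(v)$, $\overline{A}(v)$ are the sets of arcs (ordered pairs of adjacent vertices) with origin, resp. terminus, $v$; automorphisms act on arcs in the natural way. A legal colouring is a map $c:AT\to X\cup Y$ restricting to a bijection $A(v)\to X$ for $v\in V_X$, to a bijection $A(v)\to Y$ for $v\in V_Y$, and constant on each $\overline{A}(v)$; $c(\overline{A}(v))$ denotes this constant value. *)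

theory Defs
  imports Main "HOL-Library.Equipollence"
begin

definition arcs :: "('v \<Rightarrow> 'v \<Rightarrow> bool) \<Rightarrow> ('v \<times> 'v) set" where
  "arcs E = {(u, w). E u w}"

definition out_arcs :: "('v \<Rightarrow> 'v \<Rightarrow> bool) \<Rightarrow> 'v \<Rightarrow> ('v \<times> 'v) set" where
  "out_arcs E v = {(v, w) | w. E v w}"

definition in_arcs :: "('v \<Rightarrow> 'v \<Rightarrow> bool) \<Rightarrow> 'v \<Rightarrow> ('v \<times> 'v) set" where
  "in_arcs E v = {(u, v) | u. E u v}"

definition walk :: "('v \<Rightarrow> 'v \<Rightarrow> bool) \<Rightarrow> 'v list \<Rightarrow> bool" where
  "walk E xs \<longleftrightarrow> xs \<noteq> [] \<and> (\<forall>i. Suc i < length xs \<longrightarrow> E (xs ! i) (xs ! Suc i))"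

definition is_cycle :: "('v \<Rightarrow> 'v \<Rightarrow> bool) \<Rightarrow> 'v list \<Rightarrow> bool" where
  "is_cycle E xs \<longleftrightarrow> length xs \<ge> 3 \<and> distinct xs \<and>
     (\<forall>i < length xs. E (xs ! i) (xs ! ((i + 1) mod length xs)))"

definition is_tree :: "('v \<Rightarrow> 'v \<Rightarrow> bool) \<Rightarrow> bool" where
  "is_tree E \<longleftrightarrow> (\<forall>u w. E u w \<longrightarrow> E w u) \<and> (\<forall>u. \<not> E u u) \<and>
     (\<forall>u w. \<exists>xs. walk E xs \<and> hd xs = u \<and> last xs = w) \<and>
     (\<nexists>xs. is_cycle E xs)"

definition tree_dist :: "('v \<Rightarrow> 'v \<Rightarrow> bool) \<Rightarrow> 'v \<Rightarrow> 'v \<Rightarrow> nat" where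
  "tree_dist E u w = (LEAST n. \<exists>xs. walk E xs \<and> hd xs = u \<and> last xs = w \<and> length xs = Suc n)"

(* T (on the whole vertex type) is the (|X|,|Y|)-biregular tree with bipartition
   VT = VX \<union> (UNIV - VX): vertices in VX have valency |X|, the others valency |Y|. *)
definition biregular_tree ::
  "('v \<Rightarrow> 'v \<Rightarrow> bool) \<Rightarrow> 'v set \<Rightarrow> 'c set \<Rightarrow> 'c set \<Rightarrow> bool" where
  "biregular_tree E VX X Y \<longleftrightarrow> is_tree E \<and>
     (\<forall>u w. E u w \<longrightarrow> (u \<in> VX \<longleftrightarrow> w \<notin> VX)) \<and>
     (\<forall>v \<in> VX. {w. E v w} \<approx> X) \<and>
     (\<forall>v. v \<notin> VX \<longrightarrow> {w. E v w} \<approx> Y)"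

definition legal_colouring ::
  "('v \<Rightarrow> 'v \<Rightarrow> bool) \<Rightarrow> 'v set \<Rightarrow> 'c set \<Rightarrow> 'c set \<Rightarrow> ('v \<times> 'v \<Rightarrow> 'c) \<Rightarrow> bool" where
  "legal_colouring E VX X Y c \<longleftrightarrow>
     (\<forall>v \<in> VX. bij_betw c (out_arcs E v) X) \<and>
     (\<forall>v. v \<notin> VX \<longrightarrow> bij_betw c (out_arcs E v) Y) \<and>
     (\<forall>v. \<forall>a \<in> in_arcs E v. \<forall>b \<in> in_arcs E v. c a = c b)"

(* c(\<overline>A(v)): the constant value of c on the arcs with terminus v *)
definition in_colour :: "('v \<Rightarrow> 'v \<Rightarrow> bool) \<Rightarrow> ('v \<times> 'v \<Rightarrow> 'c) \<Rightarrow> 'v \<Rightarrow> 'c" where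
  "in_colour E c v = the_elem (c ` in_arcs E v)"

definition tree_aut :: "('v \<Rightarrow> 'v \<Rightarrow> bool) \<Rightarrow> ('v \<Rightarrow> 'v) \<Rightarrow> bool" where
  "tree_aut E g \<longleftrightarrow> bij g \<and> (\<forall>u w. E u w \<longleftrightarrow> E (g u) (g w))"

end

theory Submission
  imports Defs "HOL-Combinatorics.Transposition"
begin

text \<open>Since v and v' lie on the same side of the bipartition, the in-colours of v and v' lie in
  the same part of X \<union> Y, and the transposition exchanging them is an admissible \<sigma>.
  Given \<sigma>, the condition c = \<sigma> \<circ> c' \<circ> g forces g vertex by vertex: if u is adjacent to its
  parent p (its unique neighbour closer to v; uniqueness is where acyclicity enters), then g u
  must be the neighbour of g p along the arc whose c'-colour is mapped by \<sigma> to c (p, u).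
  Defining g by this recursion on the distance from v gives a colour-preserving map, which is
  unique because legal colourings are injective on the arcs leaving a vertex; running the same
  construction for \<sigma>\<inverse> from v' produces its inverse, so g is an automorphism.\<close>

lemma walk_iff_successively: "walk E xs \<longleftrightarrow> xs \<noteq> [] \<and> successively E xs"
  by (simp add: walk_def successively_conv_nth)

lemma walk_induct:
  assumes "walk E xs" and "P (hd xs)" and "\<And>p q. P p \<Longrightarrow> E p q \<Longrightarrow> P q"
  shows "P (last xs)"
  using assms(1,2) unfolding walk_iff_successively
proof (induction xs rule: induct_list012)
  case (3 x y zs)
  then show ?case using assms(3) by simp
qed simp_all

lemma is_cycleI:
  assumes "3 \<le> length xs" and "distinct xs" and "successively E xs" and "E (last xs) (hd xs)"
  shows "is_cycle E xs"
  unfolding is_cycle_def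
proof (intro conjI allI impI)
  fix i assume i: "i < length xs"
  show "E (xs ! i) (xs ! ((i + 1) mod length xs))"
  proof (cases "Suc i < length xs")
    case True
    then show ?thesis using assms(3) by (simp add: successively_nth)
  next
    case False
    with i have "i = length xs - 1" by simp
    moreover have "xs \<noteq> []" using assms(1) by auto
    ultimately show ?thesis using assms(4) by (simp add: last_conv_nth hd_conv_nth)
  qed
qed (use assms in auto)

locale biregular =
  fixes E :: "'v \<Rightarrow> 'v \<Rightarrow> bool" and VX :: "'v set" and X Y :: "'c set"
  assumes biregular: "biregular_tree E VX X Y"
    and X_nonempty: "X \<noteq> {}" and Y_nonempty: "Y \<noteq> {}"
begin

lemma adj_sym: "E u w \<Longrightarrow> E w u"
  using biregular by (simp add: biregular_tree_def is_tree_def)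

lemma connected: "\<exists>xs. walk E xs \<and> hd xs = u \<and> last xs = w"
  using biregular by (simp add: biregular_tree_def is_tree_def)

lemma no_cycle: "\<not> is_cycle E xs"
  using biregular by (simp add: biregular_tree_def is_tree_def)

lemma adj_side: "E u w \<Longrightarrow> u \<in> VX \<longleftrightarrow> w \<notin> VX"
  using biregular by (simp add: biregular_tree_def)

lemma ex_adj: "\<exists>w. E u w"
proof -
  have "{w. E u w} \<approx> (if u \<in> VX then X else Y)"
    using biregular by (simp add: biregular_tree_def)
  then show ?thesis
    using X_nonempty Y_nonempty by (auto simp: eqpoll_iff_bijections split: if_splits)
qed

lemma connected_induct:
  assumes "P a" and "\<And>p q. P p \<Longrightarrow> E p q \<Longrightarrow> P q"
  shows "P u"
  using connected[of a u] walk_induct[of E _ P] assms by blast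

lemma walk_ends_side:
  "successively E xs \<Longrightarrow> xs \<noteq> [] \<Longrightarrow> (last xs \<in> VX \<longleftrightarrow> hd xs \<in> VX) \<longleftrightarrow> odd (length xs)"
  by (induction xs rule: induct_list012) (auto dest: adj_side)

abbreviation d :: "'v \<Rightarrow> 'v \<Rightarrow> nat" where
  "d \<equiv> tree_dist E"

lemma shortest_walk: "\<exists>xs. walk E xs \<and> hd xs = u \<and> last xs = w \<and> length xs = Suc (d u w)"
proof -
  obtain xs where xs: "walk E xs" "hd xs = u" "last xs = w"
    using connected by blast
  then have "length xs = Suc (length xs - 1)"
    by (simp add: walk_def)
  with xs have "\<exists>n xs. walk E xs \<and> hd xs = u \<and> last xs = w \<and> length xs = Suc n"
    by blast
  from LeastI_ex[OF this] show ?thesis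
    unfolding tree_dist_def .
qed

lemma dist_less_length:
  assumes "walk E xs" and "hd xs = u" and "last xs = w"
  shows "d u w < length xs"
proof -
  have len: "length xs = Suc (length xs - 1)"
    using assms(1) by (simp add: walk_def)
  with assms have "d u w \<le> length xs - 1"
    unfolding tree_dist_def by (intro Least_le) metis
  with len show ?thesis
    by linarith
qed

lemma dist_self [simp]: "d u u = 0"
  using dist_less_length[of "[u]"] by (simp add: walk_def)

lemma dist_eq_0_iff [simp]: "d u w = 0 \<longleftrightarrow> w = u"
  using shortest_walk[of u w] by (auto simp: length_Suc_conv)

lemma dist_parity: "(w \<in> VX \<longleftrightarrow> u \<in> VX) \<longleftrightarrow> even (d u w)"
proof -
  obtain xs where "walk E xs" "hd xs = u" "last xs = w" "length xs = Suc (d u w)"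
    using shortest_walk by blast
  then show ?thesis
    using walk_ends_side[of xs] by (simp add: walk_iff_successively)
qed

lemma dist_adj_le: "E a b \<Longrightarrow> d u b \<le> Suc (d u a)"
proof -
  assume "E a b"
  obtain xs where xs: "walk E xs" "hd xs = u" "last xs = a" "length xs = Suc (d u a)"
    using shortest_walk by blast
  then have "walk E (xs @ [b])"
    using \<open>E a b\<close> by (simp add: walk_iff_successively successively_append_iff)
  moreover have "hd (xs @ [b]) = u"
    using xs by (simp add: walk_def)
  ultimately have "d u b < length (xs @ [b])"
    using dist_less_length by fastforce
  with xs show ?thesis by simp
qed

lemma dist_adj: "E a b \<Longrightarrow> d u b = Suc (d u a) \<or> d u a = Suc (d u b)"
  using dist_adj_le[of a b u] dist_adj_le[of b a u] adj_sym[of a b]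
    dist_parity[of a u] dist_parity[of b u] adj_side[of a b]
  by (cases "d u a = d u b") auto

lemma parent_exists:
  assumes "d r u = Suc n"
  shows "\<exists>p. E p u \<and> d r p = n"
proof -
  obtain xs where xs: "walk E xs" "hd xs = r" "last xs = u" "length xs = Suc (Suc n)"
    using shortest_walk assms by metis
  have "xs ! Suc n = u"
    using xs by (simp add: last_conv_nth walk_def)
  then have arc: "E (xs ! n) u"
    using xs by (metis walk_def lessI)
  have "walk E (take (Suc n) xs)" and "hd (take (Suc n) xs) = r"
    and "last (take (Suc n) xs) = xs ! n"
    using xs by (auto simp: walk_def last_conv_nth)
  then have "d r (xs ! n) \<le> n"
    using dist_less_length by fastforce
  moreover have "Suc n \<le> Suc (d r (xs ! n))"
    using dist_adj_le[OF arc, of r] assms by simp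
  ultimately show ?thesis
    using arc by (intro exI[of _ "xs ! n"]) simp
qed

text \<open>Prepend p and append q to a path joining their parents; together with a common child of p
  and q this closes a cycle, which is how parents are shown to be unique.\<close>

lemma path_within_dist:
  assumes "d r p = k" and "d r q = k" and "p \<noteq> q"
  shows "\<exists>xs. xs \<noteq> [] \<and> successively E xs \<and> distinct xs \<and> hd xs = p \<and> last xs = q \<and>
              (\<forall>x\<in>set xs. d r x \<le> k)"
  using assms
proof (induction k arbitrary: p q)
  case 0
  then show ?case by simp
next
  case (Suc k)
  obtain p' q' where p': "E p' p" "d r p' = k" and q': "E q' q" "d r q' = k"
    using parent_exists[OF Suc.prems(1)] parent_exists[OF Suc.prems(2)] by blast
  show ?case
  proof (cases "p' = q'")
    case True
    then show ?thesis
    proof (intro exI[of _ "[p, p', q]"] conjI)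
      have "p \<noteq> p'" and "q \<noteq> p'"
        using Suc.prems(1,2) p'(2) by (metis n_not_Suc_n)+
      then show "distinct [p, p', q]"
        using Suc.prems(3) by simp
      show "successively E [p, p', q]"
        using p'(1) q'(1) True adj_sym[of p' p] by simp
      show "\<forall>x\<in>set [p, p', q]. d r x \<le> Suc k"
        using Suc.prems(1,2) p'(2) by simp
    qed simp_all
  next
    case False
    then obtain xs where xs: "xs \<noteq> []" "successively E xs" "distinct xs" "hd xs = p'" "last xs = q'"
      "\<forall>x\<in>set xs. d r x \<le> k"
      using Suc.IH p'(2) q'(2) by blast
    then have "p \<notin> set xs" and "q \<notin> set xs"
      using Suc.prems(1,2) by (metis Suc_n_not_le_n)+
    with xs show ?thesis
      using Suc.prems p'(1) q'(1) adj_sym[of p' p]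
      by (intro exI[of _ "p # xs @ [q]"]) (auto simp: successively_append_iff successively_Cons)
  qed
qed

lemma parent_unique:
  assumes "E p u" and "E q u" and "d r p = k" and "d r q = k" and "d r u = Suc k"
  shows "p = q"
proof (rule ccontr)
  assume "p \<noteq> q"
  then obtain xs where xs: "xs \<noteq> []" "successively E xs" "distinct xs" "hd xs = p" "last xs = q"
    "\<forall>x\<in>set xs. d r x \<le> k"
    using path_within_dist assms(3,4) by blast
  have "u \<notin> set xs"
    using xs(6) assms(5) by fastforce
  moreover have "2 \<le> length xs"
    using xs \<open>p \<noteq> q\<close> by (cases xs rule: remdups_adj.cases) auto
  moreover have "successively E (xs @ [u])"
    using xs(1,2,5) assms(2) by (simp add: successively_append_iff)
  moreover have "E (last (xs @ [u])) (hd (xs @ [u]))"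
    using xs(1,4) adj_sym[OF assms(1)] by simp
  ultimately have "is_cycle E (xs @ [u])"
    using xs(3) by (intro is_cycleI) simp_all
  then show False
    using no_cycle by blast
qed

definition parent :: "'v \<Rightarrow> 'v \<Rightarrow> 'v" where
  "parent r u = (SOME p. E p u \<and> Suc (d r p) = d r u)"

lemma parent_adj_dist:
  assumes "d r u = Suc n"
  shows "E (parent r u) u" and "d r (parent r u) = n"
proof -
  have "\<exists>p. E p u \<and> Suc (d r p) = d r u"
    using parent_exists assms by simp
  from someI_ex[OF this] show "E (parent r u) u" and "d r (parent r u) = n"
    using assms unfolding parent_def by simp_all
qed

lemma adj_parent_cases:
  assumes "E u w"
  obtains "d r w = Suc (d r u)" and "parent r w = u"
    | "d r u = Suc (d r w)" and "parent r u = w"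
proof (cases "d r w = Suc (d r u)")
  case True
  then show ?thesis
    using that parent_adj_dist[OF True] parent_unique assms by blast
next
  case False
  then have "d r u = Suc (d r w)"
    using dist_adj[OF assms, of r] by simp
  then show ?thesis
    using that parent_adj_dist[of r u] parent_unique adj_sym[OF assms] by blast
qed

lemma colour_mem:
  "legal_colouring E VX X Y c \<Longrightarrow> E x y \<Longrightarrow> c (x, y) \<in> (if x \<in> VX then X else Y)"
  unfolding legal_colouring_def out_arcs_def bij_betw_def by auto

lemma colour_in_union: "legal_colouring E VX X Y c \<Longrightarrow> E x y \<Longrightarrow> c (x, y) \<in> X \<union> Y"
  using colour_mem by (metis UnI1 UnI2)

lemma out_colour_bij:
  "legal_colouring E VX X Y c \<Longrightarrow> bij_betw c (out_arcs E x) (if x \<in> VX then X else Y)"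
  unfolding legal_colouring_def by simp

lemma out_colour_inj:
  assumes "legal_colouring E VX X Y c" and "E x y" and "E x z" and "c (x, y) = c (x, z)"
  shows "y = z"
  using bij_betw_imp_inj_on[OF out_colour_bij[OF assms(1)]] assms(2-4)
  by (auto simp: out_arcs_def inj_on_def)

lemma out_colour_surj:
  assumes "legal_colouring E VX X Y c" and "col \<in> (if x \<in> VX then X else Y)"
  obtains y where "E x y" and "c (x, y) = col"
proof -
  have "col \<in> c ` out_arcs E x"
    using bij_betw_imp_surj_on[OF out_colour_bij[OF assms(1), of x]] assms(2) by simp
  then show ?thesis
    using that by (auto simp: out_arcs_def)
qed

lemma in_colour_eq: "legal_colouring E VX X Y c \<Longrightarrow> E w u \<Longrightarrow> in_colour E c u = c (w, u)"
proof -
  assume "legal_colouring E VX X Y c" and "E w u"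
  then have "c ` in_arcs E u = {c (w, u)}"
    unfolding legal_colouring_def in_arcs_def by blast
  then show ?thesis
    unfolding in_colour_def by simp
qed

lemma in_colour_mem:
  "legal_colouring E VX X Y c \<Longrightarrow> in_colour E c u \<in> (if u \<in> VX then Y else X)"
  using ex_adj[of u] adj_sym in_colour_eq colour_mem adj_side by fastforce

definition colour_morphism :: "('c \<Rightarrow> 'c) \<Rightarrow> ('v \<times> 'v \<Rightarrow> 'c) \<Rightarrow> ('v \<times> 'v \<Rightarrow> 'c) \<Rightarrow> ('v \<Rightarrow> 'v) \<Rightarrow> bool"
  where "colour_morphism \<sigma> c c' g \<longleftrightarrow> (\<forall>u w. E u w \<longrightarrow> E (g u) (g w) \<and> c (u, w) = \<sigma> (c' (g u, g w)))"

lemma colour_morphism_iff_arcs: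
  "tree_aut E g \<Longrightarrow> colour_morphism \<sigma> c c' g \<longleftrightarrow> (\<forall>a \<in> arcs E. c a = \<sigma> (c' (map_prod g g a)))"
  unfolding colour_morphism_def tree_aut_def arcs_def by auto

lemma colour_morphism_id: "colour_morphism id c c id"
  unfolding colour_morphism_def by simp

lemma colour_morphism_comp:
  "colour_morphism \<sigma> c c' g \<Longrightarrow> colour_morphism \<tau> c' c'' h \<Longrightarrow> colour_morphism (\<sigma> \<circ> \<tau>) c c'' (h \<circ> g)"
  unfolding colour_morphism_def by simp

lemma colour_morphism_cong:
  assumes "legal_colouring E VX X Y c'" and "\<And>x. x \<in> X \<union> Y \<Longrightarrow> \<sigma> x = \<tau> x"
  shows "colour_morphism \<sigma> c c' g \<longleftrightarrow> colour_morphism \<tau> c c' g"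
  unfolding colour_morphism_def using colour_in_union[OF assms(1)] assms(2) by metis

lemma colour_morphism_unique:
  assumes "legal_colouring E VX X Y c'" and "inj_on \<sigma> (X \<union> Y)"
    and "colour_morphism \<sigma> c c' g" and "colour_morphism \<sigma> c c' h" and "g v = h v"
  shows "g = h"
proof
  fix u
  show "g u = h u"
  proof (induction rule: connected_induct[of "\<lambda>u. g u = h u" v])
    case (2 p q)
    then have "E (g p) (g q)" and "E (g p) (h q)" and "\<sigma> (c' (g p, g q)) = \<sigma> (c' (g p, h q))"
      using assms(3,4) unfolding colour_morphism_def by metis+
    then show "g q = h q"
      using out_colour_inj[OF assms(1)] inj_onD[OF assms(2)] colour_in_union[OF assms(1)] by metis
  qed (use assms(5) in simp)
qed

lemma colour_morphism_left_inverse: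
  assumes "legal_colouring E VX X Y c"
    and "colour_morphism \<sigma> c c' g" and "colour_morphism \<tau> c' c h"
    and "\<And>x. x \<in> X \<union> Y \<Longrightarrow> \<sigma> (\<tau> x) = x" and "h (g v) = v"
  shows "h \<circ> g = id"
proof -
  have "colour_morphism (\<sigma> \<circ> \<tau>) c c (h \<circ> g)"
    using assms(2,3) by (rule colour_morphism_comp)
  then have "colour_morphism id c c (h \<circ> g)"
    using colour_morphism_cong[OF assms(1), of "\<sigma> \<circ> \<tau>" id] assms(4) by simp
  then show ?thesis
    by (rule colour_morphism_unique[OF assms(1) inj_on_id _ colour_morphism_id, where v = v])
      (simp add: assms(5))
qed

lemma ex_colour_permutation:
  assumes "X \<inter> Y = {}" and "legal_colouring E VX X Y c" and "legal_colouring E VX X Y c'"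
    and "v' \<in> VX \<longleftrightarrow> v \<in> VX"
  shows "\<exists>\<sigma>. bij_betw \<sigma> (X \<union> Y) (X \<union> Y) \<and> \<sigma> ` X = X \<and> \<sigma> (in_colour E c' v') = in_colour E c v"
proof -
  have "in_colour E c' v' \<in> X \<union> Y \<and> in_colour E c v \<in> X \<union> Y"
    and "in_colour E c' v' \<in> X \<longleftrightarrow> in_colour E c v \<in> X"
    using in_colour_mem[OF assms(3), of v'] in_colour_mem[OF assms(2), of v] assms(1,4)
    by (auto split: if_splits)
  then show ?thesis
    by (intro exI[of _ "transpose (in_colour E c' v') (in_colour E c v)"]) simp
qed

end

lemma bij_betw_image_complement:
  assumes "bij_betw \<sigma> (X \<union> Y) (X \<union> Y)" and "\<sigma> ` X = X" and "X \<inter> Y = {}"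
  shows "\<sigma> ` Y = Y"
proof -
  have "\<sigma> ` Y = \<sigma> ` ((X \<union> Y) - X)"
    using assms(3) by (simp add: Un_Diff Diff_triv inf_commute)
  also have "\<dots> = \<sigma> ` (X \<union> Y) - \<sigma> ` X"
    using assms(1) by (intro inj_on_image_set_diff[of _ "X \<union> Y"]) (auto simp: bij_betw_def)
  also have "\<dots> = Y"
    using assms by (auto simp: bij_betw_def)
  finally show ?thesis .
qed

locale colour_lift = biregular E VX X Y
  for E :: "'v \<Rightarrow> 'v \<Rightarrow> bool" and VX :: "'v set" and X Y :: "'c set" +
  fixes c c' :: "'v \<times> 'v \<Rightarrow> 'c" and \<sigma> :: "'c \<Rightarrow> 'c" and r r' :: 'v
  assumes legal: "legal_colouring E VX X Y c" and legal': "legal_colouring E VX X Y c'"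
    and disjoint: "X \<inter> Y = {}"
    and perm: "bij_betw \<sigma> (X \<union> Y) (X \<union> Y)" and perm_X: "\<sigma> ` X = X"
    and root_colour: "\<sigma> (in_colour E c' r') = in_colour E c r"
    and root_side: "r' \<in> VX \<longleftrightarrow> r \<in> VX"
begin

lemma matching_out_arc:
  assumes "col \<in> (if x \<in> VX then X else Y)"
  shows "\<exists>!y. E x y \<and> \<sigma> (c' (x, y)) = col"
proof (rule ex_ex1I)
  have "\<sigma> ` (if x \<in> VX then X else Y) = (if x \<in> VX then X else Y)"
    using perm_X bij_betw_image_complement[OF perm perm_X disjoint] by simp
  with assms have "col \<in> \<sigma> ` (if x \<in> VX then X else Y)"
    by simp
  then obtain col' where col': "col' \<in> (if x \<in> VX then X else Y)" and "col = \<sigma> col'"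
    by (rule imageE)
  moreover obtain y where "E x y" and "c' (x, y) = col'"
    using out_colour_surj[OF legal' col'] .
  ultimately show "\<exists>y. E x y \<and> \<sigma> (c' (x, y)) = col"
    by blast
next
  fix y z
  assume y: "E x y \<and> \<sigma> (c' (x, y)) = col" and z: "E x z \<and> \<sigma> (c' (x, z)) = col"
  then have "c' (x, y) = c' (x, z)"
    using inj_onD[OF bij_betw_imp_inj_on[OF perm]] colour_in_union[OF legal'] by simp
  then show "y = z"
    using out_colour_inj[OF legal'] y z by blast
qed

text \<open>Recursion on the distance from r: the function G in the step is the lift on the previous
  level, applied to the parent of u.\<close>

definition lift :: "'v \<Rightarrow> 'v" where
  "lift u = rec_nat (\<lambda>_. r')
     (\<lambda>_ G u. THE y. E (G (parent r u)) y \<and> \<sigma> (c' (G (parent r u), y)) = c (parent r u, u))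
     (d r u) u"

lemma lift_root: "lift r = r'"
  unfolding lift_def by simp

lemma lift_Suc:
  assumes "d r u = Suc n"
  shows "lift u = (THE y. E (lift (parent r u)) y \<and> \<sigma> (c' (lift (parent r u), y)) = c (parent r u, u))"
  using assms parent_adj_dist(2)[OF assms] unfolding lift_def by simp

lemma lift_parent_arc_if_side:
  assumes "d r u = Suc n" and "lift (parent r u) \<in> VX \<longleftrightarrow> parent r u \<in> VX"
  shows "E (lift (parent r u)) (lift u) \<and> \<sigma> (c' (lift (parent r u), lift u)) = c (parent r u, u)"
proof -
  have "c (parent r u, u) \<in> (if lift (parent r u) \<in> VX then X else Y)"
    using colour_mem[OF legal parent_adj_dist(1)[OF assms(1)]] assms(2) by simp
  from theI'[OF matching_out_arc[OF this]] show ?thesis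
    using lift_Suc[OF assms(1)] by simp
qed

lemma lift_side: "lift u \<in> VX \<longleftrightarrow> u \<in> VX"
proof (induction "d r u" arbitrary: u)
  case 0
  then show ?case using root_side lift_root by simp
next
  case (Suc n)
  have parent_side: "lift (parent r u) \<in> VX \<longleftrightarrow> parent r u \<in> VX"
    using Suc.hyps(1) parent_adj_dist(2)[OF Suc.hyps(2)[symmetric]] by simp
  then have "E (lift (parent r u)) (lift u)"
    using lift_parent_arc_if_side[OF Suc.hyps(2)[symmetric]] by blast
  with parent_side show ?case
    using adj_side parent_adj_dist(1)[OF Suc.hyps(2)[symmetric]] by blast
qed

lemma lift_parent_arc:
  "d r u = Suc n \<Longrightarrow> E (lift (parent r u)) (lift u) \<and> \<sigma> (c' (lift (parent r u), lift u)) = c (parent r u, u)"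
  using lift_parent_arc_if_side lift_side by blast

lemma lift_in_colour: "\<sigma> (in_colour E c' (lift u)) = in_colour E c u"
proof (cases "d r u")
  case 0
  then show ?thesis using root_colour lift_root by simp
next
  case (Suc n)
  then have arc: "E (lift (parent r u)) (lift u)"
    and colour: "\<sigma> (c' (lift (parent r u), lift u)) = c (parent r u, u)"
    using lift_parent_arc by blast+
  have "\<sigma> (in_colour E c' (lift u)) = \<sigma> (c' (lift (parent r u), lift u))"
    using in_colour_eq[OF legal' arc] by simp
  also have "\<dots> = in_colour E c u"
    using colour in_colour_eq[OF legal parent_adj_dist(1)[OF Suc]] by simp
  finally show ?thesis .
qed

lemma colour_morphism_lift: "colour_morphism \<sigma> c c' lift"
  unfolding colour_morphism_def
proof (intro allI impI)
  fix u w
  assume "E u w"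
  then show "E (lift u) (lift w) \<and> c (u, w) = \<sigma> (c' (lift u, lift w))"
  proof (cases rule: adj_parent_cases[where r = r])
    case 1
    then show ?thesis using lift_parent_arc[OF 1(1)] by simp
  next
    case 2
    then have arc: "E (lift u) (lift w)"
      using lift_parent_arc[OF 2(1)] adj_sym by simp
    have "c (u, w) = \<sigma> (in_colour E c' (lift w))"
      using in_colour_eq[OF legal \<open>E u w\<close>] lift_in_colour by simp
    also have "\<dots> = \<sigma> (c' (lift u, lift w))"
      using in_colour_eq[OF legal' arc] by simp
    finally show ?thesis using arc by simp
  qed
qed

lemma inverse_colour_lift: "colour_lift E VX X Y c' c (inv_into (X \<union> Y) \<sigma>) r' r"
proof
  have inj: "inj_on \<sigma> (X \<union> Y)"
    using perm by (rule bij_betw_imp_inj_on)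
  show "bij_betw (inv_into (X \<union> Y) \<sigma>) (X \<union> Y) (X \<union> Y)"
    using perm by (rule bij_betw_inv_into)
  show "inv_into (X \<union> Y) \<sigma> ` X = X"
    using inv_into_image_cancel[OF inj, of X] perm_X by simp
  have "in_colour E c' r' \<in> X \<union> Y"
    using in_colour_mem[OF legal', of r'] by (auto split: if_splits)
  then show "inv_into (X \<union> Y) \<sigma> (in_colour E c r) = in_colour E c' r'"
    using inv_into_f_f[OF inj] root_colour by metis
qed (use legal legal' disjoint root_side in auto)

lemma lift_tree_aut: "tree_aut E lift" and lift_image_VX: "lift ` VX = VX"
proof -
  interpret inverse: colour_lift E VX X Y c' c "inv_into (X \<union> Y) \<sigma>" r' r
    by (rule inverse_colour_lift)
  have left_inverse: "inverse.lift \<circ> lift = id"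
    by (rule colour_morphism_left_inverse[OF legal colour_morphism_lift inverse.colour_morphism_lift,
          where v = r])
      (simp_all add: bij_betw_inv_into_right[OF perm] lift_root inverse.lift_root)
  have right_inverse: "lift \<circ> inverse.lift = id"
    by (rule colour_morphism_left_inverse[OF legal' inverse.colour_morphism_lift colour_morphism_lift,
          where v = r'])
      (simp_all add: inv_into_f_f[OF bij_betw_imp_inj_on[OF perm]] lift_root inverse.lift_root)
  have lift_inverse: "inverse.lift (lift u) = u" and inverse_lift: "lift (inverse.lift u) = u" for u
    using left_inverse right_inverse by (simp_all add: fun_eq_iff)
  have "E u w \<longleftrightarrow> E (lift u) (lift w)" for u w
    using colour_morphism_lift inverse.colour_morphism_lift lift_inverse
    unfolding colour_morphism_def by metis
  then show "tree_aut E lift"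
    unfolding tree_aut_def using o_bij[OF left_inverse right_inverse] by blast
  show "lift ` VX = VX"
  proof
    show "VX \<subseteq> lift ` VX"
      using lift_side inverse_lift by (metis image_eqI subsetI)
  qed (use lift_side in blast)
qed

lemma ex1_colour_preserving_aut:
  "\<exists>!g. tree_aut E g \<and> g ` VX = VX \<and> g r = r' \<and> (\<forall>a \<in> arcs E. c a = \<sigma> (c' (map_prod g g a)))"
proof (rule ex1I[of _ lift])
  show "tree_aut E lift \<and> lift ` VX = VX \<and> lift r = r' \<and>
        (\<forall>a \<in> arcs E. c a = \<sigma> (c' (map_prod lift lift a)))"
    using lift_tree_aut lift_image_VX lift_root colour_morphism_lift colour_morphism_iff_arcs by blast
next
  fix g
  assume g: "tree_aut E g \<and> g ` VX = VX \<and> g r = r' \<and> (\<forall>a \<in> arcs E. c a = \<sigma> (c' (map_prod g g a)))"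
  then have "colour_morphism \<sigma> c c' g"
    using colour_morphism_iff_arcs by blast
  moreover have "g r = lift r"
    using g lift_root by simp
  ultimately show "g = lift"
    using colour_morphism_unique[OF legal' bij_betw_imp_inj_on[OF perm] _ colour_morphism_lift]
    by blast
qed

end

theorem lemma3p3:
  fixes E :: "'v \<Rightarrow> 'v \<Rightarrow> bool" and VX :: "'v set"
    and X Y :: "'c set" and c c' :: "'v \<times> 'v \<Rightarrow> 'c" and v v' :: 'v
  assumes "X \<inter> Y = {}"
    and "\<exists>a\<in>X. \<exists>b\<in>X. a \<noteq> b"
    and "\<exists>a\<in>Y. \<exists>b\<in>Y. a \<noteq> b"
    and "biregular_tree E VX X Y"
    and "legal_colouring E VX X Y c"
    and "legal_colouring E VX X Y c'"
    and "even (tree_dist E v v')"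
  shows "(\<exists>\<sigma>. bij_betw \<sigma> (X \<union> Y) (X \<union> Y) \<and> \<sigma> ` X = X \<and>
              \<sigma> (in_colour E c' v') = in_colour E c v) \<and>
         (\<forall>\<sigma>. bij_betw \<sigma> (X \<union> Y) (X \<union> Y) \<and> \<sigma> ` X = X \<and>
              \<sigma> (in_colour E c' v') = in_colour E c v \<longrightarrow>
            (\<exists>!g. tree_aut E g \<and> g ` VX = VX \<and> g v = v' \<and>
                  (\<forall>a \<in> arcs E. c a = \<sigma> (c' (map_prod g g a)))))"
proof (intro conjI allI impI)
  interpret biregular E VX X Y
    using assms(2-4) by unfold_locales auto
  have side: "v' \<in> VX \<longleftrightarrow> v \<in> VX"
    using dist_parity[of v' v] assms(7) by simp
  then show "\<exists>\<sigma>. bij_betw \<sigma> (X \<union> Y) (X \<union> Y) \<and> \<sigma> ` X = X \<and> \<sigma> (in_colour E c' v') = in_colour E c v"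
    using ex_colour_permutation assms(1,5,6) by blast
  fix \<sigma>
  assume "bij_betw \<sigma> (X \<union> Y) (X \<union> Y) \<and> \<sigma> ` X = X \<and> \<sigma> (in_colour E c' v') = in_colour E c v"
  then interpret colour_lift E VX X Y c c' \<sigma> v v'
    using assms(1,5,6) side by unfold_locales auto
  show "\<exists>!g. tree_aut E g \<and> g ` VX = VX \<and> g v = v' \<and> (\<forall>a \<in> arcs E. c a = \<sigma> (c' (map_prod g g a)))"
    by (rule ex1_colour_preserving_aut)
qed

end
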